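(* Let $D$ be a finite-dimensional division $\mathbb{R}$-algebra, $n\ge 2$, and let $\mathbf{H}$ be an algebraic $\mathbb{R}$-group in the isogeny class of $\mathrm{SL}_{D^n}$ or $\mathrm{GL}_{D^n}$, with standard projective representation $\rho_{\mathrm{std}}:\mathbf{H}\to\mathrm{PGL}_{D^n}$. Let $h\in\mathbf{H}(\mathbb{R})$ be non-central. Then for every $p\in\mathbb{P}(D^n)$, the span of $\{\rho_{\mathrm{std}}(xhx^{-1})p: x\in\mathbf{H}(\mathbb{R})\}$ is the whole of $\mathbb{P}(D^n)$.
   Context: $D^n$ is viewed as a right $D$-module; $\mathrm{GL}_{D^n}$ ($\mathrm{SL}_{D^n}$) is the $\mathbb{R}$-group of $D$-linear automorphisms (of reduced norm $1$), $\mathrm{PGL}_{D^n}$ the quotient of $\mathrm{GL}_{D^n}$ by its center, and $\mathbb{P}(D^n)$ the set of $1$-dimensional right $D$-submodules; span means smallest $D$-subspace containing the points. The standard projective representation is the canonical morphism $\mathbf{H}\to\mathrm{PGL}_{D^n}$. *)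

theory Defs
  imports "HOL-Analysis.Analysis" "HOL-Algebra.Group"
begin

text \<open>D^n = 'd ^ 'n, viewed as a RIGHT D-module.\<close>

definition rscale :: "'d::real_div_algebra ^ 'n \<Rightarrow> 'd \<Rightarrow> 'd ^ 'n" where
  "rscale v c = (\<chi> i. v $ i * c)"

definition right_linear :: "('d::real_div_algebra ^ 'n \<Rightarrow> 'd ^ 'n) \<Rightarrow> bool" where
  "right_linear f \<longleftrightarrow> (\<forall>v w. f (v + w) = f v + f w) \<and> (\<forall>v c. f (rscale v c) = rscale (f v) c)"

definition GLD :: "('d::real_div_algebra ^ 'n \<Rightarrow> 'd ^ 'n) set" where
  "GLD = {f. right_linear f \<and> bij f}"

definition central_elem :: "'d::real_div_algebra \<Rightarrow> bool" where
  "central_elem c \<longleftrightarrow> (\<forall>d. c * d = d * c)"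

text \<open>Equality in PGL_{D^n}(R) = GL_{D^n}(R) modulo its centre Z(D)^*.\<close>
definition proj_equiv :: "('d::real_div_algebra ^ 'n \<Rightarrow> 'd ^ 'n) \<Rightarrow> ('d ^ 'n \<Rightarrow> 'd ^ 'n) \<Rightarrow> bool" where
  "proj_equiv f g \<longleftrightarrow> (\<exists>c. c \<noteq> 0 \<and> central_elem c \<and> (\<forall>v. f v = rscale (g v) c))"

definition dline :: "'d::real_div_algebra ^ 'n \<Rightarrow> ('d ^ 'n) set" where
  "dline v = {rscale v c | c. True}"

definition proj_points :: "(('d::real_div_algebra ^ 'n) set) set" where
  "proj_points = {dline v | v. v \<noteq> 0}"

definition pact :: "('d::real_div_algebra ^ 'n \<Rightarrow> 'd ^ 'n) \<Rightarrow> ('d ^ 'n) set \<Rightarrow> ('d ^ 'n) set" where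
  "pact f p = f ` p"

definition right_submodule :: "('d::real_div_algebra ^ 'n) set \<Rightarrow> bool" where
  "right_submodule S \<longleftrightarrow> 0 \<in> S \<and> (\<forall>v\<in>S. \<forall>w\<in>S. v + w \<in> S) \<and> (\<forall>v\<in>S. \<forall>c. rscale v c \<in> S)"

definition dspan :: "('d::real_div_algebra ^ 'n) set \<Rightarrow> ('d ^ 'n) set" where
  "dspan A = \<Inter>{S. right_submodule S \<and> A \<subseteq> S}"

definition proj_span :: "(('d::real_div_algebra ^ 'n) set) set \<Rightarrow> (('d ^ 'n) set) set" where
  "proj_span Q = {q \<in> proj_points. q \<subseteq> dspan (\<Union>Q)}"

text \<open>Transvections v |-> v + u phi(v) with phi a D-linear functional, phi(u) = 0.
  They generate SL_{D^n}(R) (elements of reduced norm 1).\<close>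
definition transvection :: "('d::real_div_algebra ^ 'n \<Rightarrow> 'd ^ 'n) \<Rightarrow> bool" where
  "transvection t \<longleftrightarrow> (\<exists>u \<phi>. (\<forall>v w. \<phi> (v + w) = \<phi> v + \<phi> w) \<and> (\<forall>v c. \<phi> (rscale v c) = \<phi> v * c)
      \<and> \<phi> u = 0 \<and> t = (\<lambda>v. v + rscale u (\<phi> v)))"

text \<open>Abstract rendering of "rho is the standard projective representation of a group H in
  the isogeny class of SL_{D^n} or GL_{D^n}", on real points: rho is a homomorphism
  H(R) -> PGL_{D^n}(R) (given by lifts to GL_{D^n}(R)), its kernel is central, and its image
  contains the image of SL_{D^n}(R) (generated by transvections).\<close>
definition std_proj_rep :: "('h, 'm) monoid_scheme \<Rightarrow> ('h \<Rightarrow> 'd::real_div_algebra ^ 'n \<Rightarrow> 'd ^ 'n) \<Rightarrow> bool" where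
  "std_proj_rep H \<rho> \<longleftrightarrow>
     (\<forall>x\<in>carrier H. \<rho> x \<in> GLD)
   \<and> (\<forall>x\<in>carrier H. \<forall>y\<in>carrier H. proj_equiv (\<rho> (x \<otimes>\<^bsub>H\<^esub> y)) (\<rho> x \<circ> \<rho> y))
   \<and> (\<forall>x\<in>carrier H. proj_equiv (\<rho> x) id \<longrightarrow> (\<forall>y\<in>carrier H. x \<otimes>\<^bsub>H\<^esub> y = y \<otimes>\<^bsub>H\<^esub> x))
   \<and> (\<forall>t. transvection t \<longrightarrow> (\<exists>x\<in>carrier H. proj_equiv (\<rho> x) t))"

end

theory Submission
  imports Defs
begin

text \<open>Let \<open>p = v D\<close>, let \<open>W\<close> be the span of the lines \<open>\<rho>(x h x\<inverse>) p\<close>, and call \<open>f\<close> a lift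
  if it agrees with some \<open>\<rho> x\<close> up to a central scalar. Conjugation gives \<open>f (\<rho> h w) \<in> W\<close> for
  every lift \<open>f\<close> with \<open>f w = v\<close>, and transvections and their products are lifts. If some
  transvection \<open>t\<close> with \<open>t w = v\<close> sends \<open>\<rho> h w\<close> off the line \<open>p\<close>, composing \<open>t\<close> with the
  transvections fixing \<open>v\<close> sweeps out a hyperplane, so \<open>W\<close> is everything. Otherwise, as
  transvections carry every vector off \<open>p\<close> to \<open>v\<close>, every vector is an eigenvector of \<open>\<rho> h\<close>;
  for \<open>n \<ge> 2\<close> this forces \<open>\<rho> h\<close> to be a central scalar, so \<open>h\<close> lies in the central kernel
  of \<open>\<rho>\<close>.\<close>

lemma rscale_nth [simp]: "rscale v c $ i = v $ i * c"
  by (simp add: rscale_def)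

lemma rscale_rscale [simp]: "rscale (rscale v a) b = rscale v (a * b)"
  by (simp add: vec_eq_iff mult.assoc)

lemma rscale_one [simp]: "rscale v 1 = v"
  by (simp add: vec_eq_iff)

lemma rscale_zero_left [simp]: "rscale 0 c = 0"
  and rscale_zero_right [simp]: "rscale v 0 = 0"
  by (simp_all add: vec_eq_iff)

lemma rscale_eq_0_iff [simp]: "rscale v c = 0 \<longleftrightarrow> v = 0 \<or> (c::'d::real_div_algebra) = 0"
  by (auto simp: vec_eq_iff)

lemma rscale_add_left: "rscale (v + w) c = rscale v c + rscale w c"
  by (simp add: vec_eq_iff distrib_right)

lemma rscale_add_right: "rscale v (a + b) = rscale v a + rscale v b"
  by (simp add: vec_eq_iff distrib_left)

lemma rscale_minus_right: "rscale v (- c) = - rscale v c"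
  by (simp add: vec_eq_iff)

lemma mem_dline: "w \<in> dline v \<longleftrightarrow> (\<exists>c. w = rscale v c)"
  by (simp add: dline_def)

lemma rscale_independent:
  assumes "v \<noteq> 0" "w \<notin> dline v" "rscale v a + rscale w b = 0"
  shows "a = 0 \<and> b = 0"
proof -
  have "b = 0"
  proof (rule ccontr)
    assume "b \<noteq> 0"
    have "rscale w b = rscale v (- a)"
      using assms(3) by (simp add: rscale_minus_right eq_neg_iff_add_eq_0 add.commute)
    then have "w = rscale v (- a * inverse b)"
      using \<open>b \<noteq> 0\<close> by (metis rscale_rscale rscale_one right_inverse)
    then show False
      using assms(2) by (auto simp: mem_dline)
  qed
  then show ?thesis
    using assms(1,3) by simp
qed

lemma right_linear_add: "right_linear f \<Longrightarrow> f (v + w) = f v + f w"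
  by (simp add: right_linear_def)

lemma right_linear_rscale: "right_linear f \<Longrightarrow> f (rscale v c) = rscale (f v) c"
  by (simp add: right_linear_def)

lemma right_linear_zero: "right_linear f \<Longrightarrow> f 0 = 0"
  by (metis add_cancel_right_right right_linear_add)

definition right_functional :: "('d::real_div_algebra ^ 'n \<Rightarrow> 'd) \<Rightarrow> bool" where
  "right_functional \<phi> \<longleftrightarrow> (\<forall>v w. \<phi> (v + w) = \<phi> v + \<phi> w) \<and> (\<forall>v c. \<phi> (rscale v c) = \<phi> v * c)"

lemma right_functional_add: "right_functional \<phi> \<Longrightarrow> \<phi> (v + w) = \<phi> v + \<phi> w"
  by (simp add: right_functional_def)

lemma right_functional_rscale: "right_functional \<phi> \<Longrightarrow> \<phi> (rscale v c) = \<phi> v * c"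
  by (simp add: right_functional_def)

lemma right_functional_diff: "right_functional \<phi> \<Longrightarrow> \<phi> (v - w) = \<phi> v - \<phi> w"
  by (metis add_diff_cancel diff_add_cancel right_functional_add)

lemma right_functional_lincomb:
  assumes "right_functional \<phi>" "right_functional \<psi>"
  shows "right_functional (\<lambda>y. \<phi> y + a * \<psi> y)"
  using assms by (simp add: right_functional_def algebra_simps)

lemma right_functional_coordinate:
  assumes "v \<noteq> 0"
  obtains \<phi> where "right_functional \<phi>" "\<phi> v = 1"
proof -
  obtain j where "v $ j \<noteq> 0"
    using assms by (auto simp: vec_eq_iff)
  then have "right_functional (\<lambda>y. inverse (v $ j) * y $ j)" "inverse (v $ j) * v $ j = 1"
    by (simp_all add: right_functional_def algebra_simps)
  then show thesis
    using that by blast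
qed

lemma right_functional_separating:
  assumes "v \<noteq> 0" "z \<notin> dline v"
  obtains \<phi> where "right_functional \<phi>" "\<phi> v = 0" "\<phi> z = 1"
proof -
  obtain \<psi> where \<psi>: "right_functional \<psi>" "\<psi> v = 1"
    using right_functional_coordinate[OF assms(1)] by blast
  define z' where "z' = z - rscale v (\<psi> z)"
  have "z' \<noteq> 0"
    using assms(2) by (auto simp: z'_def mem_dline)
  then obtain \<psi>' where \<psi>': "right_functional \<psi>'" "\<psi>' z' = 1"
    using right_functional_coordinate by blast
  define \<phi> where "\<phi> = (\<lambda>y. \<psi>' y + (- \<psi>' v) * \<psi> y)"
  have \<phi>: "right_functional \<phi>"
    unfolding \<phi>_def using \<psi>'(1) \<psi>(1) by (rule right_functional_lincomb)
  have "\<psi> z' = 0"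
    using \<psi> by (simp add: z'_def right_functional_diff right_functional_rscale)
  then have "\<phi> z' = 1"
    using \<psi>' by (simp add: \<phi>_def)
  moreover have "\<phi> v = 0"
    using \<psi> by (simp add: \<phi>_def)
  moreover have "\<phi> z = \<phi> z' + \<phi> v * \<psi> z"
    using \<phi> by (metis z'_def diff_add_cancel right_functional_add right_functional_rscale)
  ultimately show thesis
    using that \<phi> by simp
qed

lemma transvectionI:
  assumes "right_functional \<phi>" "\<phi> u = 0"
  shows "transvection (\<lambda>v. v + rscale u (\<phi> v))"
  using assms unfolding transvection_def right_functional_def by blast

lemma transvectionE:
  assumes "transvection t"
  obtains u \<phi> where "right_functional \<phi>" "\<phi> u = 0" "t = (\<lambda>v. v + rscale u (\<phi> v))"
  using assms unfolding transvection_def right_functional_def by blast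

lemma transvection_id: "transvection id"
proof -
  have "transvection (\<lambda>v. v + rscale 0 ((\<lambda>_. 0) v))"
    by (rule transvectionI) (simp_all add: right_functional_def)
  then show ?thesis
    by (simp add: id_def)
qed

lemma transvection_right_linear: "transvection t \<Longrightarrow> right_linear t"
  by (elim transvectionE)
    (simp add: right_linear_def right_functional_def rscale_add_left rscale_add_right algebra_simps)

lemma transvection_inj:
  assumes "transvection t"
  shows "inj t"
proof
  obtain u \<phi> where \<phi>: "right_functional \<phi>" "\<phi> u = 0" and t: "t = (\<lambda>v. v + rscale u (\<phi> v))"
    using assms by (rule transvectionE)
  have \<phi>_t: "\<phi> (t x) = \<phi> x" for x
    using \<phi> by (simp add: t right_functional_add right_functional_rscale)
  fix x y
  assume "t x = t y"
  then have "\<phi> x = \<phi> y"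
    using \<phi>_t by metis
  then show "x = y"
    using \<open>t x = t y\<close> by (simp add: t)
qed

lemma transvection_moving:
  assumes "v \<noteq> 0" "w \<notin> dline v"
  obtains t where "transvection t" "t w = v"
proof -
  obtain \<phi>\<^sub>0 where \<phi>\<^sub>0: "right_functional \<phi>\<^sub>0" "\<phi>\<^sub>0 v = 0" "\<phi>\<^sub>0 w = 1"
    using right_functional_separating[OF assms] by blast
  obtain \<psi> where \<psi>: "right_functional \<psi>" "\<psi> v = 1"
    using right_functional_coordinate[OF assms(1)] by blast
  define \<phi> where "\<phi> = (\<lambda>y. \<psi> y + (1 - \<psi> w) * \<phi>\<^sub>0 y)"
  have \<phi>: "right_functional \<phi>"
    unfolding \<phi>_def using \<psi>(1) \<phi>\<^sub>0(1) by (rule right_functional_lincomb)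
  have "\<phi> v = 1" "\<phi> w = 1"
    using \<phi>\<^sub>0 \<psi> by (simp_all add: \<phi>_def)
  then have "transvection (\<lambda>y. y + rscale (v - w) (\<phi> y))"
    using \<phi> by (intro transvectionI) (simp_all add: right_functional_diff)
  moreover have "w + rscale (v - w) (\<phi> w) = v"
    using \<open>\<phi> w = 1\<close> by simp
  ultimately show thesis
    using that by blast
qed

lemma right_submodule_add: "right_submodule S \<Longrightarrow> v \<in> S \<Longrightarrow> w \<in> S \<Longrightarrow> v + w \<in> S"
  and right_submodule_rscale: "right_submodule S \<Longrightarrow> v \<in> S \<Longrightarrow> rscale v c \<in> S"
  by (simp_all add: right_submodule_def)

lemma right_submodule_diff:
  assumes "right_submodule S" "v \<in> S" "w \<in> S"
  shows "v - w \<in> S"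
proof -
  have "rscale w (- 1) \<in> S"
    using assms by (simp add: right_submodule_rscale)
  then have "- w \<in> S"
    by (simp add: rscale_minus_right)
  then show ?thesis
    using right_submodule_add[OF assms(1,2)] by (metis diff_conv_add_uminus)
qed

lemma right_submodule_rscale_cancel:
  assumes "right_submodule S" "rscale v c \<in> S" "c \<noteq> 0"
  shows "v \<in> S"
  using right_submodule_rscale[OF assms(1,2), of "inverse c"] assms(3) by simp

lemma right_submodule_dspan: "right_submodule (dspan A)"
  unfolding dspan_def right_submodule_def by auto

lemma dspan_superset: "A \<subseteq> dspan A"
  unfolding dspan_def by auto

text \<open>With \<open>\<phi> v = 0\<close> and \<open>\<phi> z = 1\<close>, the transvection \<open>y \<mapsto> y + u \<phi>(y)\<close> fixes \<open>v\<close> and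
  moves \<open>z\<close> to \<open>z + u\<close> for every \<open>u \<in> ker \<phi>\<close>; and \<open>ker \<phi>\<close> together with \<open>z\<close> spans.\<close>
lemma right_submodule_eq_UNIV_if_transvection_stable:
  assumes W: "right_submodule W" and "v \<noteq> 0" "z \<notin> dline v"
    and stable: "\<And>t. transvection t \<Longrightarrow> t v = v \<Longrightarrow> t z \<in> W"
  shows "W = UNIV"
proof -
  obtain \<phi> where \<phi>: "right_functional \<phi>" "\<phi> v = 0" "\<phi> z = 1"
    using right_functional_separating[OF assms(2,3)] by blast
  have "z \<in> W"
    using stable[OF transvection_id] by simp
  have kernel: "u \<in> W" if "\<phi> u = 0" for u
  proof -
    have "z + u \<in> W"
      using stable[OF transvectionI[OF \<phi>(1) that]] \<phi>(2,3) by simp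
    then show ?thesis
      using right_submodule_diff[OF W _ \<open>z \<in> W\<close>] by fastforce
  qed
  have "y \<in> W" for y
  proof -
    have "y - rscale z (\<phi> y) \<in> W"
      using \<phi> by (intro kernel) (simp add: right_functional_diff right_functional_rscale)
    moreover have "rscale z (\<phi> y) \<in> W"
      using W \<open>z \<in> W\<close> by (rule right_submodule_rscale)
    ultimately show ?thesis
      using right_submodule_add[OF W] by fastforce
  qed
  then show ?thesis
    by blast
qed

lemma eigenvector_if_transvection_images_collinear:
  assumes A: "right_linear A" and "v \<noteq> 0" and "w \<noteq> 0"
    and collinear: "\<And>t w. transvection t \<Longrightarrow> t w = v \<Longrightarrow> t (A w) \<in> dline v"
  shows "\<exists>c. A w = rscale w c"
proof (cases "w \<in> dline v")
  case True
  then obtain d where d: "w = rscale v d"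
    by (auto simp: mem_dline)
  with \<open>w \<noteq> 0\<close> have "d \<noteq> 0"
    by simp
  obtain l where "A v = rscale v l"
    using collinear[OF transvection_id, of v] by (auto simp: mem_dline)
  then have "A w = rscale v (l * d)"
    using A by (simp add: d right_linear_rscale)
  also have "\<dots> = rscale w (inverse d * l * d)"
    using \<open>d \<noteq> 0\<close> by (simp add: d mult.assoc[symmetric])
  finally show ?thesis
    by blast
next
  case False
  then obtain t where t: "transvection t" "t w = v"
    using transvection_moving[OF \<open>v \<noteq> 0\<close>] by blast
  then obtain \<mu> where "t (A w) = rscale v \<mu>"
    using collinear by (auto simp: mem_dline)
  also have "\<dots> = t (rscale w \<mu>)"
    using transvection_right_linear[OF t(1)] by (simp add: t(2) right_linear_rscale)
  finally have "A w = rscale w \<mu>"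
    using transvection_inj[OF t(1)] by (simp add: inj_eq)
  then show ?thesis
    by blast
qed

lemma eigenvalues_eq_if_not_collinear:
  assumes A: "right_linear A" and eigen: "\<And>w. w \<noteq> 0 \<Longrightarrow> \<exists>c. A w = rscale w c"
    and "w\<^sub>1 \<noteq> 0" "w\<^sub>2 \<notin> dline w\<^sub>1"
    and a: "A w\<^sub>1 = rscale w\<^sub>1 a" and b: "A w\<^sub>2 = rscale w\<^sub>2 b"
  shows "a = b"
proof -
  have "w\<^sub>1 + w\<^sub>2 \<noteq> 0"
    using rscale_independent[OF assms(3,4), of 1 1] by auto
  then obtain \<mu> where "A (w\<^sub>1 + w\<^sub>2) = rscale (w\<^sub>1 + w\<^sub>2) \<mu>"
    using eigen by blast
  then have "rscale w\<^sub>1 (\<mu> - a) + rscale w\<^sub>2 (\<mu> - b) = 0"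
    using A a b by (simp add: right_linear_add vec_eq_iff algebra_simps)
  then have "\<mu> - a = 0 \<and> \<mu> - b = 0"
    by (rule rscale_independent[OF assms(3,4)])
  then show ?thesis
    by auto
qed

lemma mem_dline_axis: "y \<in> dline (axis i 1) \<Longrightarrow> j \<noteq> i \<Longrightarrow> y $ j = 0"
  by (auto simp: mem_dline axis_def)

lemma proj_equiv_id_if_all_eigenvectors:
  assumes A: "right_linear A" "inj A" and "CARD('n) \<ge> 2"
    and eigen: "\<And>w::'d::real_div_algebra ^ 'n. w \<noteq> 0 \<Longrightarrow> \<exists>c. A w = rscale w c"
  shows "proj_equiv A id"
proof -
  obtain i j :: 'n where "i \<noteq> j"
    using \<open>CARD('n) \<ge> 2\<close> card_le_Suc0_iff_eq[of "UNIV :: 'n set"] by fastforce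
  define e where "e k = (axis k 1 :: 'd ^ 'n)" for k
  have "e k \<noteq> 0" for k
    by (simp add: e_def)
  obtain c where c: "A (e i) = rscale (e i) c"
    using eigen \<open>e i \<noteq> 0\<close> by blast
  have propagate: "A y = rscale y c" if "y \<noteq> 0" "y \<notin> dline u" "u \<noteq> 0" "A u = rscale u c" for y u
  proof -
    obtain d where "A y = rscale y d"
      using eigen \<open>y \<noteq> 0\<close> by blast
    with eigenvalues_eq_if_not_collinear[OF A(1) eigen that(3,2,4)] show ?thesis
      by simp
  qed
  have "e j \<notin> dline (e i)"
    using mem_dline_axis[of "e j" i j] \<open>i \<noteq> j\<close> by (auto simp: e_def)
  then have cj: "A (e j) = rscale (e j) c"
    using propagate \<open>e j \<noteq> 0\<close> \<open>e i \<noteq> 0\<close> c by blast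
  have scalar: "A y = rscale y c" for y
  proof (cases "y = 0 \<or> y \<notin> dline (e i)")
    case True
    then show ?thesis
      using propagate[of y "e i"] \<open>e i \<noteq> 0\<close> c right_linear_zero[OF A(1)] by (cases "y = 0") auto
  next
    case False
    have "y \<notin> dline (e j)"
    proof
      assume "y \<in> dline (e j)"
      then have "y $ k = 0" for k
        using False mem_dline_axis \<open>i \<noteq> j\<close> unfolding e_def by metis
      then show False
        using False by (simp add: vec_eq_iff)
    qed
    then show ?thesis
      using propagate False \<open>e j \<noteq> 0\<close> cj by blast
  qed
  have "central_elem c"
    unfolding central_elem_def
  proof
    fix d
    have "rscale (e i) (d * c) = rscale (e i) (c * d)"
      using scalar[of "rscale (e i) d"] c A(1) by (simp add: right_linear_rscale)
    then show "c * d = d * c"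
      by (metis axis_nth e_def mult_1 rscale_nth)
  qed
  moreover have "c \<noteq> 0"
    using c right_linear_zero[OF A(1)] \<open>inj A\<close> \<open>e i \<noteq> 0\<close> by (metis inj_eq rscale_zero_right)
  ultimately show ?thesis
    unfolding proj_equiv_def using scalar by auto
qed

lemma central_elem_one: "central_elem 1"
  by (simp add: central_elem_def)

lemma central_elem_mult: "central_elem a \<Longrightarrow> central_elem b \<Longrightarrow> central_elem (a * b)"
  unfolding central_elem_def by (metis mult.assoc)

lemma central_elem_inverse:
  assumes "central_elem (c::'d::real_div_algebra)"
  shows "central_elem (inverse c)"
  unfolding central_elem_def
proof
  fix d
  show "inverse c * d = d * inverse c"
  proof (cases "c = 0")
    case False
    have "inverse c * d = inverse c * (d * c) * inverse c"
      using False by (simp add: mult.assoc)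
    also have "\<dots> = d * inverse c"
      using assms False unfolding central_elem_def by (metis mult.assoc mult_1 left_inverse)
    finally show ?thesis .
  qed simp
qed

lemma proj_equiv_refl: "proj_equiv f f"
  unfolding proj_equiv_def using central_elem_one by force

lemma proj_equiv_sym:
  assumes "proj_equiv f g"
  shows "proj_equiv g f"
proof -
  obtain c where "c \<noteq> 0" "central_elem c" "\<And>v. f v = rscale (g v) c"
    using assms unfolding proj_equiv_def by blast
  then have "g v = rscale (f v) (inverse c)" for v
    by simp
  then show ?thesis
    unfolding proj_equiv_def using \<open>c \<noteq> 0\<close> central_elem_inverse[OF \<open>central_elem c\<close>]
    by (auto intro!: exI[of _ "inverse c"])
qed

lemma proj_equiv_trans [trans]:
  assumes "proj_equiv f g" "proj_equiv g k"
  shows "proj_equiv f k"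
proof -
  obtain c where "c \<noteq> 0" "central_elem c" "\<And>v. f v = rscale (g v) c"
    using assms(1) unfolding proj_equiv_def by blast
  moreover obtain d where "d \<noteq> 0" "central_elem d" "\<And>v. g v = rscale (k v) d"
    using assms(2) unfolding proj_equiv_def by blast
  ultimately show ?thesis
    unfolding proj_equiv_def by (metis central_elem_mult no_zero_divisors rscale_rscale)
qed

lemma proj_equiv_comp:
  assumes "proj_equiv F f" "proj_equiv G g" "right_linear F"
  shows "proj_equiv (F \<circ> G) (f \<circ> g)"
proof -
  obtain c where "c \<noteq> 0" "central_elem c" "\<And>v. F v = rscale (f v) c"
    using assms(1) unfolding proj_equiv_def by blast
  moreover obtain d where "d \<noteq> 0" "central_elem d" "\<And>v. G v = rscale (g v) d"
    using assms(2) unfolding proj_equiv_def by blast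
  moreover have "(F \<circ> G) v = rscale ((f \<circ> g) v) (c * d)" for v
  proof -
    have "F (G v) = rscale (F (g v)) d"
      using assms(3) \<open>\<And>v. G v = rscale (g v) d\<close> by (simp add: right_linear_rscale)
    then show ?thesis
      using \<open>\<And>v. F v = rscale (f v) c\<close> by simp
  qed
  ultimately show ?thesis
    unfolding proj_equiv_def by (metis central_elem_mult no_zero_divisors)
qed

lemma GLD_right_linear: "f \<in> GLD \<Longrightarrow> right_linear f"
  and GLD_inj: "f \<in> GLD \<Longrightarrow> inj f"
  by (simp_all add: GLD_def bij_is_inj)

lemma std_proj_rep_GLD: "std_proj_rep H \<rho> \<Longrightarrow> x \<in> carrier H \<Longrightarrow> \<rho> x \<in> GLD"
  and std_proj_rep_mult:
    "std_proj_rep H \<rho> \<Longrightarrow> x \<in> carrier H \<Longrightarrow> y \<in> carrier H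
      \<Longrightarrow> proj_equiv (\<rho> (x \<otimes>\<^bsub>H\<^esub> y)) (\<rho> x \<circ> \<rho> y)"
  and std_proj_rep_kernel_central:
    "std_proj_rep H \<rho> \<Longrightarrow> x \<in> carrier H \<Longrightarrow> proj_equiv (\<rho> x) id
      \<Longrightarrow> y \<in> carrier H \<Longrightarrow> x \<otimes>\<^bsub>H\<^esub> y = y \<otimes>\<^bsub>H\<^esub> x"
  and std_proj_rep_transvection:
    "std_proj_rep H \<rho> \<Longrightarrow> transvection t \<Longrightarrow> \<exists>x\<in>carrier H. proj_equiv (\<rho> x) t"
  unfolding std_proj_rep_def by blast+

lemma std_proj_rep_transvection_comp:
  assumes "group H" "std_proj_rep H \<rho>" "transvection s" "transvection t"
  shows "\<exists>x\<in>carrier H. proj_equiv (\<rho> x) (s \<circ> t)"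
proof -
  obtain x y where xy: "x \<in> carrier H" "y \<in> carrier H" "proj_equiv (\<rho> x) s" "proj_equiv (\<rho> y) t"
    using std_proj_rep_transvection[OF assms(2)] assms(3,4) by metis
  have "proj_equiv (\<rho> (x \<otimes>\<^bsub>H\<^esub> y)) (s \<circ> t)"
    using std_proj_rep_mult[OF assms(2) xy(1,2)]
      proj_equiv_comp[OF xy(3,4) GLD_right_linear[OF std_proj_rep_GLD[OF assms(2) xy(1)]]]
    by (rule proj_equiv_trans)
  then show ?thesis
    using group.subgroup_self[OF assms(1)] xy(1,2) by (meson subgroup.m_closed)
qed

text \<open>If \<open>f\<close> lifts \<open>\<rho> x\<close>, then \<open>\<rho> (x h x\<inverse>) \<circ> f\<close> and \<open>f \<circ> \<rho> h\<close> both lift \<open>\<rho> (x h)\<close>.\<close>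
lemma std_proj_rep_conj:
  assumes H: "group H" "std_proj_rep H \<rho>" and "h \<in> carrier H" "x \<in> carrier H"
    and f: "proj_equiv (\<rho> x) f"
  shows "\<exists>c. c \<noteq> 0 \<and> (\<forall>w. \<rho> (x \<otimes>\<^bsub>H\<^esub> h \<otimes>\<^bsub>H\<^esub> inv\<^bsub>H\<^esub> x) (f w) = rscale (f (\<rho> h w)) c)"
proof -
  interpret group H by (fact H(1))
  define k where "k = x \<otimes>\<^bsub>H\<^esub> h \<otimes>\<^bsub>H\<^esub> inv\<^bsub>H\<^esub> x"
  have k: "k \<in> carrier H" "k \<otimes>\<^bsub>H\<^esub> x = x \<otimes>\<^bsub>H\<^esub> h"
    using assms(3,4) by (simp_all add: k_def m_assoc)
  have lin: "right_linear (\<rho> y)" if "y \<in> carrier H" for y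
    using GLD_right_linear[OF std_proj_rep_GLD[OF H(2) that]] .
  have "proj_equiv (\<rho> k \<circ> f) (\<rho> k \<circ> \<rho> x)"
    using proj_equiv_comp[OF proj_equiv_refl f lin[OF k(1)]] by (rule proj_equiv_sym)
  also have "proj_equiv (\<rho> k \<circ> \<rho> x) (\<rho> (x \<otimes>\<^bsub>H\<^esub> h))"
    using proj_equiv_sym[OF std_proj_rep_mult[OF H(2) k(1) assms(4)]] k(2) by simp
  also have "proj_equiv (\<rho> (x \<otimes>\<^bsub>H\<^esub> h)) (\<rho> x \<circ> \<rho> h)"
    using std_proj_rep_mult[OF H(2) assms(4,3)] .
  also have "proj_equiv (\<rho> x \<circ> \<rho> h) (f \<circ> \<rho> h)"
    using proj_equiv_comp[OF f proj_equiv_refl lin[OF assms(4)]] .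
  finally obtain c where "c \<noteq> 0" "\<forall>w. \<rho> k (f w) = rscale (f (\<rho> h w)) c"
    unfolding proj_equiv_def comp_def by blast
  then show ?thesis
    unfolding k_def[symmetric] by blast
qed

definition conj_orbit ::
    "('h, 'm) monoid_scheme \<Rightarrow> ('h \<Rightarrow> 'd::real_div_algebra ^ 'n \<Rightarrow> 'd ^ 'n) \<Rightarrow> 'h
      \<Rightarrow> ('d ^ 'n) set \<Rightarrow> ('d ^ 'n) set set" where
  "conj_orbit H \<rho> h p = {pact (\<rho> (x \<otimes>\<^bsub>H\<^esub> h \<otimes>\<^bsub>H\<^esub> inv\<^bsub>H\<^esub> x)) p | x. x \<in> carrier H}"

lemma lift_image_mem_dspan_conj_orbit:
  assumes H: "group H" "std_proj_rep H \<rho>" and "h \<in> carrier H" "x \<in> carrier H"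
    and "proj_equiv (\<rho> x) f" "f w = v"
  shows "f (\<rho> h w) \<in> dspan (\<Union> (conj_orbit H \<rho> h (dline v)))"
proof -
  let ?k = "x \<otimes>\<^bsub>H\<^esub> h \<otimes>\<^bsub>H\<^esub> inv\<^bsub>H\<^esub> x"
  obtain c where c: "c \<noteq> 0" "\<forall>w. \<rho> ?k (f w) = rscale (f (\<rho> h w)) c"
    using std_proj_rep_conj[OF assms(1-5)] by blast
  have "v \<in> dline v"
    by (metis mem_dline rscale_one)
  then have "\<rho> ?k v \<in> pact (\<rho> ?k) (dline v)"
    unfolding pact_def by (rule imageI)
  moreover have "pact (\<rho> ?k) (dline v) \<in> conj_orbit H \<rho> h (dline v)"
    unfolding conj_orbit_def using \<open>x \<in> carrier H\<close> by blast
  ultimately have "rscale (f (\<rho> h w)) c \<in> dspan (\<Union> (conj_orbit H \<rho> h (dline v)))"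
    using c(2)[rule_format, of w] \<open>f w = v\<close> dspan_superset by fastforce
  then show ?thesis
    using right_submodule_rscale_cancel[OF right_submodule_dspan] c(1) by blast
qed

lemma dspan_conj_orbit_eq_UNIV:
  fixes \<rho> :: "'h \<Rightarrow> 'd::real_div_algebra ^ 'n \<Rightarrow> 'd ^ 'n"
  assumes H: "group H" "std_proj_rep H \<rho>" and "CARD('n) \<ge> 2"
    and h: "h \<in> carrier H" "\<exists>y\<in>carrier H. h \<otimes>\<^bsub>H\<^esub> y \<noteq> y \<otimes>\<^bsub>H\<^esub> h"
    and "v \<noteq> 0"
  shows "dspan (\<Union> (conj_orbit H \<rho> h (dline v))) = UNIV"
proof (rule ccontr)
  define W where "W = dspan (\<Union> (conj_orbit H \<rho> h (dline v)))"
  assume "\<not> ?thesis"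
  then have "W \<noteq> UNIV"
    by (simp add: W_def)
  have collinear: "t (\<rho> h w) \<in> dline v" if t: "transvection t" "t w = v" for t w
  proof (rule ccontr)
    assume "t (\<rho> h w) \<notin> dline v"
    moreover have "s (t (\<rho> h w)) \<in> W" if s: "transvection s" "s v = v" for s
    proof -
      obtain x where "x \<in> carrier H" "proj_equiv (\<rho> x) (s \<circ> t)"
        using std_proj_rep_transvection_comp[OF H s(1) t(1)] by blast
      moreover have "(s \<circ> t) w = v"
        using s(2) t(2) by simp
      ultimately show ?thesis
        using lift_image_mem_dspan_conj_orbit[OF H h(1)] unfolding W_def by fastforce
    qed
    ultimately have "W = UNIV"
      using right_submodule_eq_UNIV_if_transvection_stable[OF _ \<open>v \<noteq> 0\<close>] right_submodule_dspan
      by (auto simp: W_def)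
    with \<open>W \<noteq> UNIV\<close> show False ..
  qed
  have lin: "right_linear (\<rho> h)" "inj (\<rho> h)"
    using std_proj_rep_GLD[OF H(2) h(1)] by (simp_all add: GLD_right_linear GLD_inj)
  have "\<exists>c. \<rho> h w = rscale w c" if "w \<noteq> 0" for w
    using lin(1) \<open>v \<noteq> 0\<close> that by (rule eigenvector_if_transvection_images_collinear) (fact collinear)
  then have "proj_equiv (\<rho> h) id"
    using proj_equiv_id_if_all_eigenvectors[OF lin \<open>CARD('n) \<ge> 2\<close>] by blast
  then show False
    using std_proj_rep_kernel_central[OF H(2) h(1)] h(2) by blast
qed

theorem proposition3p13:
  fixes H :: "('h, 'm) monoid_scheme"
    and \<rho> :: "'h \<Rightarrow> ('d::real_div_algebra) ^ 'n \<Rightarrow> 'd ^ 'n"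
    and h :: 'h and p :: "('d ^ 'n) set"
  assumes "\<exists>B::'d set. finite B \<and> span B = UNIV"
    and "CARD('n) \<ge> 2"
    and "group H"
    and "std_proj_rep H \<rho>"
    and "h \<in> carrier H"
    and "\<exists>y\<in>carrier H. h \<otimes>\<^bsub>H\<^esub> y \<noteq> y \<otimes>\<^bsub>H\<^esub> h"
    and "p \<in> proj_points"
  shows "proj_span {pact (\<rho> (x \<otimes>\<^bsub>H\<^esub> h \<otimes>\<^bsub>H\<^esub> inv\<^bsub>H\<^esub> x)) p | x. x \<in> carrier H} = proj_points"
proof -
  obtain v where "v \<noteq> 0" "p = dline v"
    using \<open>p \<in> proj_points\<close> unfolding proj_points_def by blast
  then have "dspan (\<Union> (conj_orbit H \<rho> h p)) = UNIV"
    using dspan_conj_orbit_eq_UNIV[OF assms(3,4,2,5,6)] by blast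
  then show ?thesis
    unfolding proj_span_def conj_orbit_def by simp
qed

end
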